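(* Let $q$ be a positive integer and $\omega=e^{i\pi/q}$. Then $$\frac1q\sum_{k=0}^{q-1}\gamma(\omega^{2k+1})=\int_0^1\int_0^1\frac{1-x}{(1+x^qy^q)(-\log xy)}\,dx\,dy=\frac{1}{2q}\left[\psi\!\left(\frac{q+1}{2q}\right)-\psi\!\left(\frac{1}{2q}\right)\right]-\log\frac{\Gamma\left(\frac{1}{2q}\right)\Gamma\left(\frac{q+2}{2q}\right)}{\Gamma\left(\frac1q\right)\Gamma\left(\frac{q+1}{2q}\right)}.$$
   Context: $\gamma(z)=\sum_{n=1}^{\infty} z^{n-1}\left(\frac{1}{n}-\log\frac{n+1}{n}\right)$ for $|z|\le1$. $\Gamma$ is Euler's gamma function and $\psi=\Gamma'/\Gamma$ is the digamma function. *)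

theory Defs
  imports "HOL-Analysis.Analysis"
begin

text \<open>gamma(z) = sum_{n>=1} z^(n-1) (1/n - log((n+1)/n)), reindexed with m = n - 1.\<close>
definition gamma_series :: "complex \<Rightarrow> complex" where
  "gamma_series z = (\<Sum>m. z ^ m * (1 / of_nat (m + 1)
      - of_real (ln (real (m + 2) / real (m + 1)))))"

end

theory Submission
  imports Defs "HOL-Real_Asymp.Real_Asymp"
begin

(* Write a(c) = 1/c - ln((c + 1)/c), so that gamma(z) = sum_m a(m + 1) z^m.  Averaging over the
   q-th roots of -1 kills every coefficient with q not dividing m and turns the remaining ones
   into (-1)^j a(qj + 1); grouped in pairs, the left-hand side becomes the series of
   a(2iq + 1) - a(2iq + q + 1).  Since a(s(k + alpha)) = 1/(s(k + alpha)) + ln(k + alpha) -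
   ln(k + alpha + 1/s), this series splits into a Digamma series and a telescoping quotient of
   Gamma partial products, which gives the closed form.

   For the double integral put t = xy.  Then 1/((1 + t^q)(-ln t)) = (1 - t^q) sum_i t^(2iq)
   integral_0^oo t^u du, and by Tonelli the integral becomes sum_i integral_0^oo of
   integral_0^1 integral_0^1 (1 - x)(1 - t^q) t^(u + 2iq) dy dx du.  The inner double integral of
   (1 - x) t^v is 1/((v + 1)^2 (v + 2)) = -a'(v + 1), so the u-integral yields exactly the same
   pairs a(2iq + 1) - a(2iq + q + 1). *)

definition gamma_coeff :: "real \<Rightarrow> real" where
  "gamma_coeff c = 1 / c - ln ((c + 1) / c)"

lemma gamma_series_altdef:
  "gamma_series z = (\<Sum>m. z ^ m * of_real (gamma_coeff (real m + 1)))"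
  by (simp add: gamma_series_def gamma_coeff_def add_ac)

lemma gamma_coeff_has_real_derivative:
  assumes "c > 0"
  shows "(gamma_coeff has_real_derivative - 1 / (c\<^sup>2 * (c + 1))) (at c)"
proof (rule has_field_derivative_transform_within_open)
  show "((\<lambda>x. 1 / x - ln (x + 1) + ln x) has_real_derivative - 1 / (c\<^sup>2 * (c + 1))) (at c)"
    using assms by (auto intro!: derivative_eq_intros simp: field_simps power2_eq_square)
  show "1 / x - ln (x + 1) + ln x = gamma_coeff x" if "x \<in> {0<..}" for x
    using that by (simp add: gamma_coeff_def ln_div)
qed (use assms in auto)

lemma gamma_coeff_antimono:
  assumes "0 < c" "c \<le> d"
  shows "gamma_coeff d \<le> gamma_coeff c"
proof (rule DERIV_nonpos_imp_nonincreasing[OF assms(2)])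
  fix x assume "c \<le> x"
  then show "\<exists>y. DERIV gamma_coeff x :> y \<and> y \<le> 0"
    using assms gamma_coeff_has_real_derivative[of x] by (intro exI conjI) auto
qed

lemma gamma_coeff_tendsto_0: "(gamma_coeff \<longlongrightarrow> 0) at_top"
  unfolding gamma_coeff_def[abs_def] by real_asymp

lemma gamma_coeff_bounds:
  assumes "c \<ge> 1"
  shows "0 \<le> gamma_coeff c" "gamma_coeff c \<le> 1 / c\<^sup>2"
proof -
  have "(c + 1) / c = 1 + 1 / c"
    using assms by (simp add: field_simps)
  moreover have "ln (1 + 1 / c) \<le> 1 / c" "1 / c - (1 / c)\<^sup>2 \<le> ln (1 + 1 / c)"
    using assms by (intro ln_add_one_self_le_self ln_one_plus_pos_lower_bound; simp)+
  ultimately show "0 \<le> gamma_coeff c" "gamma_coeff c \<le> 1 / c\<^sup>2"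
    by (simp_all add: gamma_coeff_def power_divide)
qed

lemma summable_gamma_series:
  fixes z :: complex
  assumes "norm z \<le> 1"
  shows "summable (\<lambda>m. z ^ m * of_real (gamma_coeff (real m + 1)))"
proof (rule summable_comparison_test')
  show "summable (\<lambda>m. 1 / (real m + 1)\<^sup>2)"
    using sums_summable[OF inverse_squares_sums] by (simp add: add.commute)
  fix m
  have "norm (z ^ m) \<le> 1"
    using assms by (simp add: norm_power power_le_one)
  then have "norm (z ^ m) * gamma_coeff (real m + 1) \<le> gamma_coeff (real m + 1)"
    using gamma_coeff_bounds(1)[of "real m + 1"] by (intro mult_left_le_one_le) auto
  then show "norm (z ^ m * of_real (gamma_coeff (real m + 1))) \<le> 1 / (real m + 1)\<^sup>2"
    using gamma_coeff_bounds[of "real m + 1"] by (simp add: norm_mult)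
qed

lemma Digamma_diff_sums:
  fixes z w :: "'a :: {real_normed_field, banach}"
  assumes "z \<noteq> 0" "w \<noteq> 0"
  shows "(\<lambda>k. inverse (z + of_nat k) - inverse (w + of_nat k)) sums (Digamma w - Digamma z)"
proof -
  have "(\<lambda>k. inverse (of_nat (Suc k)) - inverse (x + of_nat k)) sums (Digamma x + euler_mascheroni)"
    if "x \<noteq> 0" for x :: 'a
    using summable_Digamma[OF that] by (simp add: Digamma_def summable_sums)
  from sums_diff[OF this[OF assms(2)] this[OF assms(1)]] show ?thesis
    by simp
qed

lemma ln_Gamma_series_real_eq:
  fixes z :: real
  assumes "z > 0"
  shows "ln_Gamma_series z n = z * ln (real n) + ln (fact n) - (\<Sum>k\<le>n. ln (z + real k))"
proof -
  have "(\<Sum>k=1..n. ln (z / real k + 1)) = (\<Sum>k=1..n. ln (z + real k)) - (\<Sum>k=1..n. ln (real k))"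
  proof (unfold sum_subtractf[symmetric], intro sum.cong refl)
    fix k assume "k \<in> {1..n}"
    then have "z / real k + 1 = (z + real k) / real k"
      by (simp add: field_simps)
    then show "ln (z / real k + 1) = ln (z + real k) - ln (real k)"
      using assms \<open>k \<in> {1..n}\<close> by (simp add: ln_div)
  qed
  moreover have "(\<Sum>k=1..n. ln (real k)) = ln (fact n)"
    unfolding fact_prod of_nat_prod by (rule ln_prod[symmetric]) auto
  moreover have "(\<Sum>k\<le>n. ln (z + real k)) = ln z + (\<Sum>k=1..n. ln (z + real k))"
    by (simp add: atMost_atLeast0 sum.atLeast_Suc_atMost)
  ultimately show ?thesis
    by (simp add: ln_Gamma_series_def)
qed

lemma ln_Gamma_quotient_sums:
  fixes a b c d :: real
  assumes "a > 0" "b > 0" "c > 0" "d > 0" "a + d = b + c"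
  shows "(\<lambda>k. ln (a + real k) + ln (d + real k) - ln (b + real k) - ln (c + real k))
           sums (ln (Gamma b) + ln (Gamma c) - ln (Gamma a) - ln (Gamma d))" (is "?t sums ?L")
proof -
  have partial_sums: "(\<Sum>k<Suc n. ?t k)
          = ln_Gamma_series b n + ln_Gamma_series c n - ln_Gamma_series a n - ln_Gamma_series d n" for n
  proof -
    have "(a + d - b - c) * ln (real n) = 0"
      using assms(5) by simp
    then show ?thesis
      using assms(1-4)
      by (simp add: ln_Gamma_series_real_eq lessThan_Suc_atMost sum.distrib sum_subtractf algebra_simps)
  qed
  have "(\<lambda>n. ln_Gamma_series b n + ln_Gamma_series c n - ln_Gamma_series a n - ln_Gamma_series d n) \<longlonglongrightarrow> ?L"
    unfolding ln_Gamma_real_pos[symmetric, OF assms(1)] ln_Gamma_real_pos[symmetric, OF assms(2)]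
      ln_Gamma_real_pos[symmetric, OF assms(3)] ln_Gamma_real_pos[symmetric, OF assms(4)]
    using assms(1-4) by (intro tendsto_diff tendsto_add ln_Gamma_real_LIMSEQ)
  then have "(\<lambda>n. \<Sum>k<Suc n. ?t k) \<longlonglongrightarrow> ?L"
    unfolding partial_sums .
  then show ?thesis
    unfolding sums_def by (rule LIMSEQ_imp_Suc)
qed

lemma gamma_coeff_scaled:
  assumes "s > 0" "x > 0"
  shows "gamma_coeff (s * x) = inverse s * inverse x + ln x - ln (x + inverse s)"
proof -
  have "(s * x + 1) / (s * x) = (x + inverse s) / x"
    using assms by (simp add: field_simps)
  then have "gamma_coeff (s * x) = 1 / (s * x) - ln ((x + inverse s) / x)"
    by (simp add: gamma_coeff_def)
  also have "1 / (s * x) = inverse s * inverse x"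
    by (simp add: field_simps)
  also have "ln ((x + inverse s) / x) = ln (x + inverse s) - ln x"
    using assms by (intro ln_divide_pos) (auto intro: add_pos_pos)
  finally show ?thesis
    by simp
qed

lemma gamma_coeff_diff_sums:
  assumes "s > 0" "a > 0" "c > 0"
  shows "(\<lambda>k. gamma_coeff (s * (a + real k)) - gamma_coeff (s * (c + real k)))
           sums (inverse s * (Digamma c - Digamma a)
                 + (ln (Gamma (a + inverse s)) + ln (Gamma c) - ln (Gamma a) - ln (Gamma (c + inverse s))))"
proof -
  have "(\<lambda>k. inverse s * (inverse (a + real k) - inverse (c + real k))
            + (ln (a + real k) + ln (c + inverse s + real k) - ln (a + inverse s + real k) - ln (c + real k)))
         sums (inverse s * (Digamma c - Digamma a)
               + (ln (Gamma (a + inverse s)) + ln (Gamma c) - ln (Gamma a) - ln (Gamma (c + inverse s))))"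
    using assms
    by (intro sums_add sums_mult Digamma_diff_sums ln_Gamma_quotient_sums) (simp_all add: add_pos_pos)
  moreover have "gamma_coeff (s * (a + real k)) - gamma_coeff (s * (c + real k))
      = inverse s * (inverse (a + real k) - inverse (c + real k))
        + (ln (a + real k) + ln (c + inverse s + real k) - ln (a + inverse s + real k) - ln (c + real k))" for k
  proof -
    have pos: "a + real k > 0" "c + real k > 0"
      using assms by auto
    show ?thesis
      unfolding gamma_coeff_scaled[OF assms(1) pos(1)] gamma_coeff_scaled[OF assms(1) pos(2)]
      by (simp add: algebra_simps)
  qed
  ultimately show ?thesis
    by (simp only:)
qed

lemma gamma_coeff_pairs_sums:
  fixes q :: nat
  assumes "q > 0"
  shows "(\<lambda>i. gamma_coeff (real (2 * i * q) + 1) - gamma_coeff (real (2 * i * q) + real q + 1))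
    sums (1 / (2 * real q) * (Digamma ((real q + 1) / (2 * real q)) - Digamma (1 / (2 * real q)))
          - ln ((Gamma (1 / (2 * real q)) * Gamma ((real q + 2) / (2 * real q)))
                / (Gamma (1 / real q) * Gamma ((real q + 1) / (2 * real q)))))"
proof -
  define s a c where "s = 2 * real q" and "a = 1 / (2 * real q)" and "c = (real q + 1) / (2 * real q)"
  have pos: "s > 0" "a > 0" "c > 0"
    using assms by (simp_all add: s_def a_def c_def)
  have "s * (a + real i) = real (2 * i * q) + 1" "s * (c + real i) = real (2 * i * q) + real q + 1" for i
    using assms by (simp_all add: s_def a_def c_def field_simps)
  then have "(\<lambda>i. gamma_coeff (real (2 * i * q) + 1) - gamma_coeff (real (2 * i * q) + real q + 1))
      sums (inverse s * (Digamma c - Digamma a)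
            + (ln (Gamma (a + inverse s)) + ln (Gamma c) - ln (Gamma a) - ln (Gamma (c + inverse s))))"
    using gamma_coeff_diff_sums[OF pos] by (simp only:)
  moreover have "inverse s * (Digamma c - Digamma a)
            + (ln (Gamma (a + inverse s)) + ln (Gamma c) - ln (Gamma a) - ln (Gamma (c + inverse s)))
      = 1 / (2 * real q) * (Digamma c - Digamma a)
        - ln ((Gamma a * Gamma ((real q + 2) / (2 * real q))) / (Gamma (1 / real q) * Gamma c))"
  proof -
    have shifted: "a + inverse s = 1 / real q" "c + inverse s = (real q + 2) / (2 * real q)"
        "inverse s = 1 / (2 * real q)"
      using assms by (simp_all add: s_def a_def c_def field_simps)
    have "ln ((Gamma a * Gamma (c + inverse s)) / (Gamma (a + inverse s) * Gamma c))
        = ln (Gamma a) + ln (Gamma (c + inverse s)) - ln (Gamma (a + inverse s)) - ln (Gamma c)"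
      using pos by (simp add: ln_divide_pos ln_mult_pos add_pos_pos)
    then show ?thesis
      unfolding shifted(1,2) unfolding shifted(3) by simp
  qed
  ultimately show ?thesis
    unfolding a_def c_def by simp
qed

lemma sum_odd_powers_root_of_minus_one:
  fixes q m :: nat
  assumes "q > 0"
  defines "\<omega> \<equiv> exp (\<i> * of_real pi / of_nat q)"
  shows "(\<Sum>k<q. (\<omega> ^ (2 * k + 1)) ^ m) = (if q dvd m then of_nat q * (-1) ^ (m div q) else 0)"
proof -
  have \<omega>_pow: "\<omega> ^ n = exp (\<i> * of_real pi * of_nat n / of_nat q)" for n
    unfolding \<omega>_def exp_of_nat_mult[symmetric] by (simp add: mult_ac)
  have \<omega>_q: "\<omega> ^ q = -1"
    using assms(1) by (simp add: \<omega>_pow)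
  have \<omega>_2m: "\<omega> ^ (2 * m) = exp (2 * of_real pi * \<i> * of_nat m / of_nat q)"
    by (simp add: \<omega>_pow mult_ac)
  have "(\<omega> ^ (2 * k + 1)) ^ m = \<omega> ^ m * (\<omega> ^ (2 * m)) ^ k" for k
    by (simp only: power_mult[symmetric] power_add[symmetric]) (simp add: algebra_simps)
  then have "(\<Sum>k<q. (\<omega> ^ (2 * k + 1)) ^ m) = \<omega> ^ m * (\<Sum>k<q. (\<omega> ^ (2 * m)) ^ k)"
    by (simp add: sum_distrib_left)
  also have "\<dots> = (if q dvd m then of_nat q * (-1) ^ (m div q) else 0)"
  proof (cases "q dvd m")
    case True
    then obtain j where m: "m = q * j" ..
    then have "\<omega> ^ m = (-1) ^ j" "\<omega> ^ (2 * m) = 1"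
      by (simp_all only: power_mult \<omega>_q mult.left_commute[of 2]) simp
    then show ?thesis
      using True assms(1) m by simp
  next
    case False
    have "(\<omega> ^ (2 * m)) ^ q = (\<omega> ^ q) ^ (2 * m)"
      by (simp only: power_mult[symmetric] mult.commute)
    then have "(\<omega> ^ (2 * m)) ^ q = 1"
      by (simp add: \<omega>_q)
    moreover have "\<omega> ^ (2 * m) \<noteq> 1"
      using False assms(1) unfolding \<omega>_2m by (subst complex_root_unity_eq_1) auto
    ultimately show ?thesis
      using False by (simp add: sum_gp_strict)
  qed
  finally show ?thesis .
qed

lemma gamma_series_odd_roots_sums:
  fixes q :: nat
  assumes "q > 0"
  defines "\<omega> \<equiv> exp (\<i> * of_real pi / of_nat q)"
  shows "(\<lambda>j. complex_of_real ((-1) ^ j * gamma_coeff (real (q * j) + 1)))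
           sums (1 / of_nat q * (\<Sum>k<q. gamma_series (\<omega> ^ (2 * k + 1))))"
proof -
  define F where "F m = (\<Sum>k<q. (\<omega> ^ (2 * k + 1)) ^ m * of_real (gamma_coeff (real m + 1)))" for m
  have "norm \<omega> = 1"
    by (simp add: \<omega>_def norm_exp_eq_Re)
  then have "summable (\<lambda>m. (\<omega> ^ (2 * k + 1)) ^ m * of_real (gamma_coeff (real m + 1)))" for k
    by (intro summable_gamma_series) (simp add: norm_mult norm_power)
  then have "F sums (\<Sum>k<q. gamma_series (\<omega> ^ (2 * k + 1)))"
    unfolding F_def gamma_series_altdef by (intro sums_sum summable_sums)
  moreover have F_eq: "F m = (if q dvd m then of_nat q * (-1) ^ (m div q) * of_real (gamma_coeff (real m + 1)) else 0)"
    for m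
    using sum_odd_powers_root_of_minus_one[OF assms(1), of m]
    by (simp add: F_def \<omega>_def sum_distrib_right[symmetric])
  ultimately have "(\<lambda>j. F (q * j)) sums (\<Sum>k<q. gamma_series (\<omega> ^ (2 * k + 1)))"
    using assms(1) by (subst sums_mono_reindex) (auto simp: strict_mono_def)
  then have "(\<lambda>j. F (q * j) / of_nat q) sums ((\<Sum>k<q. gamma_series (\<omega> ^ (2 * k + 1))) / of_nat q)"
    by (rule sums_divide)
  then show ?thesis
    using assms(1) by (simp add: F_eq)
qed

lemma sums_alternating_pairs:
  fixes f :: "nat \<Rightarrow> 'a :: real_normed_algebra_1"
  assumes "(\<lambda>j. (-1) ^ j * f j) sums s"
  shows "(\<lambda>i. f (2 * i) - f (2 * i + 1)) sums s"
proof -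
  have "{i * 2..<i * 2 + 2} = {2 * i, 2 * i + 1}" for i :: nat
    by auto
  then show ?thesis
    using sums_group[OF assms, of 2] by simp
qed

lemma nn_integral_powr_atLeast_0:
  fixes t m :: real
  assumes "0 < t" "t < 1"
  shows "(\<integral>\<^sup>+u. ennreal (t powr (u + m)) * indicator {0..} u \<partial>lborel) = ennreal (t powr m / - ln t)"
proof -
  have "ln t < 0"
    using assms by simp
  have "(\<integral>\<^sup>+u. ennreal (exp ((u + m) * ln t)) * indicator {0..} u \<partial>lborel)
          = ennreal (0 - exp ((0 + m) * ln t) / ln t)"
  proof (rule nn_integral_FTC_atLeast)
    show "((\<lambda>u. exp ((u + m) * ln t) / ln t) has_real_derivative exp ((u + m) * ln t)) (at u)" for u
      using \<open>ln t < 0\<close> by (auto intro!: derivative_eq_intros)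
    have "filterlim (\<lambda>u. (u + m) * ln t) at_bot at_top"
      using \<open>ln t < 0\<close> by real_asymp
    then have "((\<lambda>u. exp ((u + m) * ln t)) \<longlongrightarrow> 0) at_top"
      by (rule filterlim_compose[OF exp_at_bot])
    then show "((\<lambda>u. exp ((u + m) * ln t) / ln t) \<longlongrightarrow> 0) at_top"
      using tendsto_divide[OF _ tendsto_const[of "ln t"]] \<open>ln t < 0\<close> by fastforce
  qed auto
  then show ?thesis
    using assms by (simp add: powr_def)
qed

definition layer :: "nat \<Rightarrow> real \<Rightarrow> real \<Rightarrow> real \<Rightarrow> real" where
  "layer q v x y = (1 - x) * (1 - (x * y) ^ q) * (x * y) powr v"

lemma layer_nonneg:
  assumes "x \<in> {0..1}" "y \<in> {0..1}"
  shows "0 \<le> layer q v x y"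
proof -
  have "(x * y) ^ q \<le> 1"
    using assms by (intro power_le_one mult_le_one) auto
  then show ?thesis
    using assms by (simp add: layer_def)
qed

lemma nn_integral_layer:
  fixes x y m :: real
  assumes "x \<in> {0..1}" "0 < x * y" "x * y < 1"
  shows "(\<integral>\<^sup>+u. ennreal (layer q (u + m) x y) * indicator {0..} u \<partial>lborel)
           = ennreal ((1 - x) * (1 - (x * y) ^ q) * (x * y) powr m / - ln (x * y))"
proof -
  define K where "K = (1 - x) * (1 - (x * y) ^ q)"
  have "(x * y) ^ q \<le> 1"
    using assms by (intro power_le_one) auto
  then have "K \<ge> 0"
    using assms by (simp add: K_def)
  have "ennreal (layer q (u + m) x y) * indicator {0..} u
          = ennreal K * (ennreal ((x * y) powr (u + m)) * indicator {0..} u)" for u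
  proof -
    have "layer q (u + m) x y = K * (x * y) powr (u + m)"
      by (simp add: layer_def K_def)
    then show ?thesis
      using \<open>K \<ge> 0\<close> by (simp add: ennreal_mult mult.assoc)
  qed
  then have "(\<integral>\<^sup>+u. ennreal (layer q (u + m) x y) * indicator {0..} u \<partial>lborel)
      = ennreal K * ennreal ((x * y) powr m / - ln (x * y))"
    using assms by (simp add: nn_integral_cmult nn_integral_powr_atLeast_0)
  also have "\<dots> = ennreal (K * ((x * y) powr m / - ln (x * y)))"
    using \<open>K \<ge> 0\<close> assms by (intro ennreal_mult[symmetric] divide_nonneg_pos) auto
  finally show ?thesis
    by (simp add: K_def)
qed

lemma one_minus_divide_one_minus_square:
  fixes a b L :: real
  assumes "0 \<le> b" "b < 1"
  shows "a * (1 - b) / L * (1 / (1 - b\<^sup>2)) = a / ((1 + b) * L)"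
proof (cases "L = 0")
  case False
  have "1 - b\<^sup>2 = (1 - b) * (1 + b)"
    by (simp add: power2_eq_square algebra_simps)
  moreover have "1 - b \<noteq> 0" "1 + b \<noteq> 0"
    using assms by auto
  ultimately show ?thesis
    using False by (simp only:) (simp add: divide_simps)
qed simp

lemma layer_expansion:
  fixes x y :: real
  assumes "q > 0" "x \<in> {0..1}" "y \<in> {0..1}"
  shows "ennreal ((1 - x) / ((1 + x ^ q * y ^ q) * - ln (x * y)))
           = (\<Sum>i. \<integral>\<^sup>+u. ennreal (layer q (u + real (2 * i * q)) x y) * indicator {0..} u \<partial>lborel)"
proof (cases "x = 1 \<or> x * y = 0")
  case True
  \<comment> \<open>both sides vanish; for \<open>x * y = 0\<close> because \<open>ln 0 = 0\<close> and division by zero gives zero\<close>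
  then show ?thesis
    by (auto simp: layer_def)
next
  case False
  define t where "t = x * y"
  have "x * y \<le> x" "x < 1"
    using assms False by (auto simp: mult_left_le)
  moreover have "0 < x * y"
    using False assms by (auto simp: zero_less_mult_iff)
  ultimately have t: "0 < t" "t < 1"
    unfolding t_def by linarith+
  then have s: "0 < t ^ q" "t ^ q < 1"
    using assms(1) by (simp_all add: power_less_one_iff)
  define C where "C = (1 - x) * (1 - t ^ q) / - ln t"
  have "C \<ge> 0"
    unfolding C_def using assms t s by (intro divide_nonneg_pos) auto
  have "t powr real (2 * i * q) = (t ^ q)\<^sup>2 ^ i" for i
    using powr_realpow[OF t(1), of "2 * i * q"] by (simp add: power_mult[symmetric] mult_ac)
  then have terms: "(\<integral>\<^sup>+u. ennreal (layer q (u + real (2 * i * q)) x y) * indicator {0..} u \<partial>lborel)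
          = ennreal (C * (t ^ q)\<^sup>2 ^ i)" for i
    using nn_integral_layer[of x y q "real (2 * i * q)"] assms t by (simp add: C_def t_def)
  have geometric: "(\<lambda>i. C * (t ^ q)\<^sup>2 ^ i) sums (C * (1 / (1 - (t ^ q)\<^sup>2)))"
    using s by (intro sums_mult geometric_sums) (simp add: abs_square_less_1)
  have "C * (1 / (1 - (t ^ q)\<^sup>2)) = (1 - x) / ((1 + t ^ q) * - ln t)"
    unfolding C_def using s by (intro one_minus_divide_one_minus_square) auto
  then have "C * (1 / (1 - (t ^ q)\<^sup>2)) = (1 - x) / ((1 + x ^ q * y ^ q) * - ln (x * y))"
    by (simp add: t_def power_mult_distrib)
  then show ?thesis
    using \<open>C \<ge> 0\<close> terms geometric by (simp add: suminf_ennreal2 sums_iff)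
qed

lemma powr_add_of_nat:
  fixes x v :: real
  assumes "0 \<le> x"
  shows "x powr (v + real n) = x powr v * x ^ n"
  using assms by (cases "x = 0") (simp_all add: powr_add powr_realpow)

lemma has_integral_one_minus_times_powr:
  fixes w :: real
  assumes "w > -1"
  shows "((\<lambda>x. (1 - x) * x powr w) has_integral 1 / ((w + 1) * (w + 2))) {0..1}"
proof (rule has_integral_eq)
  show "x powr w - x powr (w + 1) = (1 - x) * x powr w" if "x \<in> {0..1}" for x
    using that powr_add_of_nat[of x w 1] by (simp add: algebra_simps)
  have "((\<lambda>x. x powr w - x powr (w + 1)) has_integral 1 / (w + 1) - 1 / (w + 2)) {0..1}"
    using has_integral_powr_from_0[of w 1] has_integral_powr_from_0[of "w + 1" 1] assms
    by (intro has_integral_diff) (simp_all add: add.assoc)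
  moreover have "1 / (w + 1) - 1 / (w + 2) = 1 / ((w + 1) * (w + 2))"
    using assms by (simp add: field_simps)
  ultimately show "((\<lambda>x. x powr w - x powr (w + 1)) has_integral 1 / ((w + 1) * (w + 2))) {0..1}"
    by simp
qed

definition layer_marginal :: "nat \<Rightarrow> real \<Rightarrow> real \<Rightarrow> real" where
  "layer_marginal q v x = (1 - x) * x powr v * (1 / (v + 1) - x ^ q / (v + q + 1))"

lemma has_integral_layer:
  fixes x v :: real
  assumes "0 \<le> x" "0 \<le> v"
  shows "((\<lambda>y. layer q v x y) has_integral layer_marginal q v x) {0..1}"
proof (rule has_integral_eq)
  show "(1 - x) * x powr v * (y powr v - x ^ q * y powr (v + q)) = layer q v x y" if "y \<in> {0..1}" for y
  proof -
    have "(x * y) powr v = x powr v * y powr v"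
      using assms that by (simp add: powr_mult)
    moreover have "y powr (v + q) = y powr v * y ^ q"
      using that by (simp add: powr_add_of_nat)
    ultimately show ?thesis
      by (simp add: layer_def power_mult_distrib algebra_simps)
  qed
  have "((\<lambda>y. y powr (v + q)) has_integral 1 / (v + q + 1)) {0..1}"
    using has_integral_powr_from_0[of "v + q" 1] assms by (simp add: add.assoc)
  then have "((\<lambda>y. x ^ q * y powr (v + q)) has_integral x ^ q * (1 / (v + q + 1))) {0..1}"
    by (rule has_integral_mult_right)
  then show "((\<lambda>y. (1 - x) * x powr v * (y powr v - x ^ q * y powr (v + q))) has_integral
          layer_marginal q v x) {0..1}"
    using has_integral_powr_from_0[of v 1] assms unfolding layer_marginal_def
    by (intro has_integral_mult_right has_integral_diff) simp_all
qed

lemma has_integral_layer_marginal: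
  fixes v :: real
  assumes "0 \<le> v"
  shows "((\<lambda>x. layer_marginal q v x) has_integral
           1 / ((v + 1)\<^sup>2 * (v + 2)) - 1 / ((v + q + 1)\<^sup>2 * (v + q + 2))) {0..1}"
proof (rule has_integral_eq)
  show "1 / (v + 1) * ((1 - x) * x powr v) - 1 / (v + q + 1) * ((1 - x) * x powr (v + q))
          = layer_marginal q v x" if "x \<in> {0..1}" for x
    using that powr_add_of_nat[of x v q]
    by (simp add: layer_marginal_def algebra_simps add_divide_distrib diff_divide_distrib)
  have "((\<lambda>x. 1 / (v + 1) * ((1 - x) * x powr v) - 1 / (v + q + 1) * ((1 - x) * x powr (v + q)))
          has_integral 1 / (v + 1) * (1 / ((v + 1) * (v + 2)))
                       - 1 / (v + q + 1) * (1 / ((v + q + 1) * (v + q + 2)))) {0..1}"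
    using assms by (intro has_integral_diff has_integral_mult_right has_integral_one_minus_times_powr) auto
  then show "((\<lambda>x. 1 / (v + 1) * ((1 - x) * x powr v) - 1 / (v + q + 1) * ((1 - x) * x powr (v + q)))
          has_integral 1 / ((v + 1)\<^sup>2 * (v + 2)) - 1 / ((v + q + 1)\<^sup>2 * (v + q + 2))) {0..1}"
    by (simp add: power2_eq_square mult.assoc)
qed

lemma layer_marginal_nonneg:
  fixes x v :: real
  assumes "x \<in> {0..1}" "0 \<le> v"
  shows "0 \<le> layer_marginal q v x"
proof -
  have "x ^ q / (v + q + 1) \<le> 1 / (v + q + 1)"
    using assms by (intro divide_right_mono power_le_one) auto
  also have "\<dots> \<le> 1 / (v + 1)"
    using assms by (intro divide_left_mono) auto
  finally show ?thesis
    using assms by (simp add: layer_marginal_def)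
qed

lemma nn_integral_layer_unit_square:
  fixes v :: real
  assumes "0 \<le> v"
  shows "(\<integral>\<^sup>+x. \<integral>\<^sup>+y. ennreal (layer q v x y) * indicator {0..1} x * indicator {0..1} y \<partial>lborel \<partial>lborel)
           = ennreal (1 / ((v + 1)\<^sup>2 * (v + 2)) - 1 / ((v + q + 1)\<^sup>2 * (v + q + 2)))"
proof -
  have "(\<integral>\<^sup>+y. ennreal (layer q v x y) * indicator {0..1} x * indicator {0..1} y \<partial>lborel)
          = ennreal (layer_marginal q v x) * indicator {0..1} x" for x
  proof (cases "x \<in> {0..1}")
    case True
    have "(\<integral>\<^sup>+y. ennreal (layer q v x y) * indicator {0..1} y \<partial>lborel) = ennreal (layer_marginal q v x)"
    proof (rule nn_integral_has_integral_lebesgue')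
      show "0 \<le> layer q v x y" if "y \<in> {0..1}" for y
        using True that by (rule layer_nonneg)
      show "((\<lambda>y. layer q v x y) has_integral layer_marginal q v x) {0..1}"
        using True assms by (intro has_integral_layer) auto
    qed
    then show ?thesis
      using True by simp
  qed simp
  moreover have "(\<integral>\<^sup>+x. ennreal (layer_marginal q v x) * indicator {0..1} x \<partial>lborel)
      = ennreal (1 / ((v + 1)\<^sup>2 * (v + 2)) - 1 / ((v + q + 1)\<^sup>2 * (v + q + 2)))"
    using assms by (intro nn_integral_has_integral_lebesgue' has_integral_layer_marginal layer_marginal_nonneg)
  ultimately show ?thesis
    by simp
qed

lemma nn_integral_gamma_coeff_diff:
  fixes m d :: real
  assumes "0 \<le> m" "0 \<le> d"
  shows "(\<integral>\<^sup>+u. ennreal (1 / ((u + m + 1)\<^sup>2 * (u + m + 2)) - 1 / ((u + m + d + 1)\<^sup>2 * (u + m + d + 2)))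
            * indicator {0..} u \<partial>lborel)
         = ennreal (gamma_coeff (m + 1) - gamma_coeff (m + d + 1))"
proof -
  let ?F = "\<lambda>u. gamma_coeff (u + m + d + 1) - gamma_coeff (u + m + 1)"
  have "(\<integral>\<^sup>+u. ennreal (1 / ((u + m + 1)\<^sup>2 * (u + m + 2)) - 1 / ((u + m + d + 1)\<^sup>2 * (u + m + d + 2)))
            * indicator {0..} u \<partial>lborel) = ennreal (0 - ?F 0)"
  proof (rule nn_integral_FTC_atLeast)
    show "(?F has_real_derivative
            1 / ((u + m + 1)\<^sup>2 * (u + m + 2)) - 1 / ((u + m + d + 1)\<^sup>2 * (u + m + d + 2))) (at u)"
      if "0 \<le> u" for u
      using that assms
      by (auto intro!: derivative_eq_intros DERIV_chain2[OF gamma_coeff_has_real_derivative]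
               simp: add_ac)
    show "0 \<le> 1 / ((u + m + 1)\<^sup>2 * (u + m + 2)) - 1 / ((u + m + d + 1)\<^sup>2 * (u + m + d + 2))"
      if "0 \<le> u" for u
    proof -
      have "(u + m + 1)\<^sup>2 * (u + m + 2) \<le> (u + m + d + 1)\<^sup>2 * (u + m + d + 2)"
        using that assms by (intro mult_mono power_mono) auto
      moreover have "0 < (u + m + 1)\<^sup>2 * (u + m + 2)"
        using that assms by simp
      ultimately show ?thesis
        by (simp add: divide_left_mono)
    qed
    have "((\<lambda>u. gamma_coeff (u + c)) \<longlongrightarrow> 0) at_top" for c
      by (rule filterlim_compose[OF gamma_coeff_tendsto_0]) real_asymp
    then show "(?F \<longlongrightarrow> 0) at_top"
      using tendsto_diff[of "\<lambda>u. gamma_coeff (u + (m + d + 1))" 0 at_top "\<lambda>u. gamma_coeff (u + (m + 1))" 0]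
      by (simp add: add.assoc)
  qed measurable
  then show ?thesis
    by (simp add: add_ac)
qed

lemma nn_integral_unit_square:
  fixes q :: nat
  assumes "q > 0"
  shows "(\<integral>\<^sup>+z. ennreal (indicator ({0..1} \<times> {0..1}) z *
            (case z of (x, y) \<Rightarrow> (1 - x) / ((1 + x ^ q * y ^ q) * - ln (x * y)))) \<partial>lborel)
         = (\<Sum>i. ennreal (gamma_coeff (real (2 * i * q) + 1) - gamma_coeff (real (2 * i * q) + real q + 1)))"
proof -
  define L where "L i x y u = ennreal (layer q (u + real (2 * i * q)) x y)
      * indicator {0..1} x * indicator {0..1} y * indicator {0..} u" for i x y u
  have expansion: "ennreal (indicator {0..1} x * indicator {0..1} y * ((1 - x) / ((1 + x ^ q * y ^ q) * - ln (x * y))))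
      = (\<Sum>i. \<integral>\<^sup>+u. L i x y u \<partial>lborel)" for x y :: real
  proof (cases "x \<in> {0..1} \<and> y \<in> {0..1}")
    case True
    then show ?thesis
      using layer_expansion[OF assms, of x y] by (simp add: L_def)
  qed (auto simp: L_def)
  have inner: "(\<integral>\<^sup>+x. \<integral>\<^sup>+y. L i x y u \<partial>lborel \<partial>lborel)
      = ennreal (1 / ((u + real (2 * i * q) + 1)\<^sup>2 * (u + real (2 * i * q) + 2))
                 - 1 / ((u + real (2 * i * q) + q + 1)\<^sup>2 * (u + real (2 * i * q) + q + 2))) * indicator {0..} u"
    for i u
    using nn_integral_layer_unit_square[of "u + real (2 * i * q)" q]
    by (cases "u \<in> {0..}") (simp_all add: L_def)
  have "(\<integral>\<^sup>+z. ennreal (indicator ({0..1} \<times> {0..1}) z *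
            (case z of (x, y) \<Rightarrow> (1 - x) / ((1 + x ^ q * y ^ q) * - ln (x * y)))) \<partial>lborel)
      = (\<integral>\<^sup>+x. \<integral>\<^sup>+y. ennreal (indicator {0..1} x * indicator {0..1} y
            * ((1 - x) / ((1 + x ^ q * y ^ q) * - ln (x * y)))) \<partial>lborel \<partial>lborel)"
    by (subst lborel_prod[symmetric], subst lborel.nn_integral_fst[symmetric]) (auto simp: indicator_times)
  also have "\<dots> = (\<integral>\<^sup>+x. \<integral>\<^sup>+y. (\<Sum>i. \<integral>\<^sup>+u. L i x y u \<partial>lborel) \<partial>lborel \<partial>lborel)"
    by (simp only: expansion)
  also have "\<dots> = (\<Sum>i. \<integral>\<^sup>+x. \<integral>\<^sup>+y. \<integral>\<^sup>+u. L i x y u \<partial>lborel \<partial>lborel \<partial>lborel)"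
    by (simp add: nn_integral_suminf L_def layer_def)
  also have "\<dots> = (\<Sum>i. \<integral>\<^sup>+u. \<integral>\<^sup>+x. \<integral>\<^sup>+y. L i x y u \<partial>lborel \<partial>lborel \<partial>lborel)"
    by (subst lborel_pair.Fubini', simp add: L_def layer_def, subst lborel_pair.Fubini', simp_all add: L_def layer_def)
  also have "\<dots> = (\<Sum>i. ennreal (gamma_coeff (real (2 * i * q) + 1) - gamma_coeff (real (2 * i * q) + real q + 1)))"
    by (simp only: inner nn_integral_gamma_coeff_diff of_nat_0_le_iff)
  finally show ?thesis .
qed

lemma integrand_nonneg:
  fixes x y :: real
  assumes "x \<in> {0..1}" "y \<in> {0..1}"
  shows "0 \<le> (1 - x) / ((1 + x ^ q * y ^ q) * - ln (x * y))"
proof -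
  have "x * y \<le> 1"
    using assms by (auto intro: mult_le_one)
  then have "ln (x * y) \<le> 0"
    using assms by (cases "x * y = 0") auto
  then have "0 \<le> (1 + x ^ q * y ^ q) * - ln (x * y)"
    using assms by (intro mult_nonneg_nonneg) auto
  then show ?thesis
    using assms by (intro divide_nonneg_nonneg) auto
qed

lemma has_integral_unit_square:
  fixes q :: nat
  assumes "q > 0"
    and sums: "(\<lambda>i. gamma_coeff (real (2 * i * q) + 1) - gamma_coeff (real (2 * i * q) + real q + 1)) sums S"
  shows "((\<lambda>(x, y). (1 - x) / ((1 + x ^ q * y ^ q) * - ln (x * y))) has_integral S) ({0..1} \<times> {0..1})"
proof -
  define g where "g = (\<lambda>(x, y). (1 - x) / ((1 + x ^ q * y ^ q) * - ln (x * y :: real)))"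
  define f where "f z = indicator ({0..1} \<times> {0..1}) z * g z" for z
  have "gamma_coeff (real (2 * i * q) + real q + 1) \<le> gamma_coeff (real (2 * i * q) + 1)" for i
    by (rule gamma_coeff_antimono) linarith+
  then have terms_nonneg: "0 \<le> gamma_coeff (real (2 * i * q) + 1) - gamma_coeff (real (2 * i * q) + real q + 1)" for i
    by (simp only: diff_ge_0_iff_ge)
  have "S \<ge> 0"
    using suminf_nonneg[OF sums_summable[OF sums] terms_nonneg] sums by (simp add: sums_iff)
  have "(\<integral>\<^sup>+z. ennreal (f z) \<partial>lborel) = ennreal S"
    using nn_integral_unit_square[OF assms(1)] terms_nonneg sums
    by (simp add: f_def g_def suminf_ennreal2 sums_iff)
  moreover have "0 \<le> f z" for z
    using integrand_nonneg by (auto simp: f_def g_def indicator_def)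
  moreover have "f \<in> borel_measurable borel"
  proof -
    have "f = (\<lambda>(x, y). indicator {0..1} x * indicator {0..1} y * ((1 - x) / ((1 + x ^ q * y ^ q) * - ln (x * y))))"
      by (auto simp: f_def g_def fun_eq_iff indicator_times)
    also have "\<dots> \<in> borel_measurable (lborel \<Otimes>\<^sub>M lborel)"
      by measurable
    finally show ?thesis
      by (simp add: lborel_prod)
  qed
  ultimately have "(f has_integral S) UNIV"
    using \<open>S \<ge> 0\<close> by (intro nn_integral_has_integral) auto
  moreover have "f = (\<lambda>z. if z \<in> {0..1} \<times> {0..1} then g z else 0)"
    by (auto simp: f_def)
  ultimately have "((\<lambda>z. if z \<in> {0..1} \<times> {0..1} then g z else 0) has_integral S) UNIV"
    by (simp only:)
  then show ?thesis
    unfolding has_integral_restrict_UNIV g_def .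
qed

theorem theorem34:
  fixes q :: nat
  assumes "q > 0"
  defines "\<omega> \<equiv> exp (\<i> * of_real pi / of_nat q)"
  defines "R \<equiv> 1 / (2 * real q) * (Digamma ((real q + 1) / (2 * real q)) - Digamma (1 / (2 * real q)))
              - ln ((Gamma (1 / (2 * real q)) * Gamma ((real q + 2) / (2 * real q)))
                    / (Gamma (1 / real q) * Gamma ((real q + 1) / (2 * real q))))"
  shows "1 / of_nat q * (\<Sum>k<q. gamma_series (\<omega> ^ (2 * k + 1))) = complex_of_real R
         \<and> ((\<lambda>(x, y). (1 - x) / ((1 + x ^ q * y ^ q) * (- ln (x * y)))) has_integral R)
             ({0..1::real} \<times> {0..1::real})"
proof
  let ?S = "1 / of_nat q * (\<Sum>k<q. gamma_series (\<omega> ^ (2 * k + 1)))"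
  let ?a = "\<lambda>j. gamma_coeff (real (q * j) + 1)"
  have pairs: "(\<lambda>i. gamma_coeff (real (2 * i * q) + 1) - gamma_coeff (real (2 * i * q) + real q + 1)) sums R"
    unfolding R_def using assms(1) by (rule gamma_coeff_pairs_sums)
  have alternating: "(\<lambda>j. complex_of_real ((-1) ^ j * ?a j)) sums ?S"
    unfolding \<omega>_def using assms(1) by (rule gamma_series_odd_roots_sums)
  then have alternating_Re: "(\<lambda>j. (-1) ^ j * ?a j) sums Re ?S"
    using sums_Re by fastforce
  have S_real: "?S = complex_of_real (Re ?S)"
    using alternating sums_of_real[OF alternating_Re] by (rule sums_unique2)
  have "(\<lambda>i. gamma_coeff (real (2 * i * q) + 1) - gamma_coeff (real (2 * i * q) + real q + 1)) sums Re ?S"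
    using sums_alternating_pairs[OF alternating_Re] by (simp add: algebra_simps)
  then have "Re ?S = R"
    using pairs by (rule sums_unique2)
  with S_real show "?S = complex_of_real R"
    by (simp only:)
  show "((\<lambda>(x, y). (1 - x) / ((1 + x ^ q * y ^ q) * (- ln (x * y)))) has_integral R) ({0..1} \<times> {0..1})"
    using assms(1) pairs by (rule has_integral_unit_square)
qed

end
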